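(* For every mixed graph $G$ without directed cycles, $\mathrm{nd}_{\mathrm m}(G^+)\le\mathrm{nd}_{\mathrm m}(G)$ and $\mathrm{cw}_{\mathrm m}(G^+)\le 4^{\mathrm{cw}_{\mathrm m}(G)}\cdot\mathrm{cw}_{\mathrm m}(G)$.
   Context: A mixed graph $G$ consists of a finite vertex set $V(G)$, a set $E(G)$ of undirected edges and a set $A(G)$ of directed arcs; it is simple and contains no directed cycle. The transitive closure $G^+$ is obtained by adding every arc $(u,v)$ such that $G$ has a directed path from $u$ to $v$, and removing any edge parallel to such an arc. $N^+(v)$, $N^-(v)$, $N^{\mathrm u}(v)$ denote out-, in- and undirected neighbors; $u,v$ have the same mixed type if $N^{\mathrm u}(u)\setminus\{v\}=N^{\mathrm u}(v)\setminus\{u\}$, $N^-(u)=N^-(v)$, $N^+(u)=N^+(v)$; $\mathrm{nd}_{\mathrm m}$ is the number of mixed types. The mixed cliquewidth $\mathrm{cw}_{\mathrm m}$ is the minimum number of labels needed to construct the graph using: create a new vertex with label $i$; disjoint union; $\eta_{i,j}$ ($i\ne j$): add an edge between every vertex labeled $i$ and every vertex labeled $j$; $\alpha_{i,j}$ ($i\ne j$): add an arc from every vertex labeled $i$ to every vertex labeled $j$; $\rho_{i\to j}$: rename label $i$ to $j$. *)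

theory Defs
  imports Main
begin

text \<open>A mixed graph is a triple (V, E, A): finite vertex set V, a symmetric
relation E of undirected edges (each undirected edge {u,v} is stored as both
(u,v) and (v,u)), and a relation A of directed arcs.\<close>

type_synonym 'a mgraph = "'a set \<times> ('a \<times> 'a) set \<times> ('a \<times> 'a) set"

definition verts :: "'a mgraph \<Rightarrow> 'a set" where "verts G = fst G"
definition edges :: "'a mgraph \<Rightarrow> ('a \<times> 'a) set" where "edges G = fst (snd G)"
definition arcs :: "'a mgraph \<Rightarrow> ('a \<times> 'a) set" where "arcs G = snd (snd G)"

definition acyclic_simple_mgraph :: "'a mgraph \<Rightarrow> bool" where
  "acyclic_simple_mgraph G \<longleftrightarrow>
     finite (verts G) \<and>
     edges G \<subseteq> verts G \<times> verts G \<and> arcs G \<subseteq> verts G \<times> verts G \<and>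
     sym (edges G) \<and> (\<forall>x. (x, x) \<notin> edges G) \<and>
     edges G \<inter> (arcs G \<union> (arcs G)\<inverse>) = {} \<and>
     acyclic (arcs G)"

definition mtrancl :: "'a mgraph \<Rightarrow> 'a mgraph" where
  "mtrancl G = (verts G,
                edges G - ((arcs G)\<^sup>+ \<union> ((arcs G)\<^sup>+)\<inverse>),
                (arcs G)\<^sup>+)"

definition Nu :: "'a mgraph \<Rightarrow> 'a \<Rightarrow> 'a set" where
  "Nu G v = {u. (v, u) \<in> edges G}"
definition Nout :: "'a mgraph \<Rightarrow> 'a \<Rightarrow> 'a set" where
  "Nout G v = {u. (v, u) \<in> arcs G}"
definition Nin :: "'a mgraph \<Rightarrow> 'a \<Rightarrow> 'a set" where
  "Nin G v = {u. (u, v) \<in> arcs G}"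

definition same_mixed_type :: "'a mgraph \<Rightarrow> 'a \<Rightarrow> 'a \<Rightarrow> bool" where
  "same_mixed_type G u v \<longleftrightarrow>
     Nu G u - {v} = Nu G v - {u} \<and> Nin G u = Nin G v \<and> Nout G u = Nout G v"

definition type_rel :: "'a mgraph \<Rightarrow> ('a \<times> 'a) set" where
  "type_rel G = {(u, v). u \<in> verts G \<and> v \<in> verts G \<and> same_mixed_type G u v}"

definition nd_m :: "'a mgraph \<Rightarrow> nat" where
  "nd_m G = card (verts G // type_rel G)"

datatype 'a cwexp =
    Vtx 'a nat
  | DUnion "'a cwexp" "'a cwexp"
  | Eta nat nat "'a cwexp"
  | Alpha nat nat "'a cwexp"
  | Rho nat nat "'a cwexp"

fun cw_eval :: "'a cwexp \<Rightarrow> 'a set \<times> ('a \<times> 'a) set \<times> ('a \<times> 'a) set \<times> ('a \<Rightarrow> nat)" where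
  "cw_eval (Vtx v i) = ({v}, {}, {}, (\<lambda>_. i))"
| "cw_eval (DUnion e1 e2) =
     (case cw_eval e1 of (V1, E1, A1, l1) \<Rightarrow>
      case cw_eval e2 of (V2, E2, A2, l2) \<Rightarrow>
        (V1 \<union> V2, E1 \<union> E2, A1 \<union> A2, (\<lambda>x. if x \<in> V1 then l1 x else l2 x)))"
| "cw_eval (Eta i j e) =
     (case cw_eval e of (V, E, A, l) \<Rightarrow>
        (V, E \<union> {(x, y). x \<in> V \<and> y \<in> V \<and>
                      ((l x = i \<and> l y = j) \<or> (l x = j \<and> l y = i))}, A, l))"
| "cw_eval (Alpha i j e) =
     (case cw_eval e of (V, E, A, l) \<Rightarrow>
        (V, E, A \<union> {(x, y). x \<in> V \<and> y \<in> V \<and> l x = i \<and> l y = j}, l))"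
| "cw_eval (Rho i j e) =
     (case cw_eval e of (V, E, A, l) \<Rightarrow>
        (V, E, A, (\<lambda>x. if l x = i then j else l x)))"

fun cw_wf :: "'a cwexp \<Rightarrow> bool" where
  "cw_wf (Vtx v i) = True"
| "cw_wf (DUnion e1 e2) = (cw_wf e1 \<and> cw_wf e2 \<and> fst (cw_eval e1) \<inter> fst (cw_eval e2) = {})"
| "cw_wf (Eta i j e) = (i \<noteq> j \<and> cw_wf e)"
| "cw_wf (Alpha i j e) = (i \<noteq> j \<and> cw_wf e)"
| "cw_wf (Rho i j e) = cw_wf e"

fun cw_labels :: "'a cwexp \<Rightarrow> nat set" where
  "cw_labels (Vtx v i) = {i}"
| "cw_labels (DUnion e1 e2) = cw_labels e1 \<union> cw_labels e2"
| "cw_labels (Eta i j e) = {i, j} \<union> cw_labels e"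
| "cw_labels (Alpha i j e) = {i, j} \<union> cw_labels e"
| "cw_labels (Rho i j e) = {i, j} \<union> cw_labels e"

definition cw_graph :: "'a cwexp \<Rightarrow> 'a mgraph" where
  "cw_graph e = (case cw_eval e of (V, E, A, l) \<Rightarrow> (V, E, A))"

definition cw_m :: "'a mgraph \<Rightarrow> nat" where
  "cw_m G = (LEAST k. \<exists>e. cw_wf e \<and> cw_labels e \<subseteq> {..<k} \<and> cw_graph e = G)"

end

theory Submission
  imports Defs
begin

text \<open>Vertices of the same mixed type in \<open>G\<close> have the same in- and out-neighbours in
  \<open>G\<^sup>+\<close> and the same undirected neighbours apart from each other, so the type partition
  of \<open>G\<close> refines that of \<open>G\<^sup>+\<close>.

  For the clique-width, fix an expression for \<open>G\<close> with \<open>k\<close> labels. Later operations treat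
  equally labelled vertices of a subexpression \<open>f\<close> alike, so whether \<open>G\<close> has a path between
  two vertices of \<open>f\<close> that is not a path of \<open>f\<close> depends only on their types: the label
  together with the sets of labels reachable from the vertex and reaching it inside \<open>f\<close>.
  Rebuilding the expression with types as labels, and adding at every union the arcs of
  \<open>G\<^sup>+\<close> and the surviving edges between the two sides, constructs \<open>G\<^sup>+\<close>. There are
  \<open>k * 4 ^ (k - 1)\<close> types, and a scratch copy of them needed for relabelling doubles this.\<close>

section \<open>Mixed neighbourhood diversity\<close>

lemma twin_trans:
  assumes sym: "\<And>x y. x \<in> N y \<longleftrightarrow> y \<in> N x" and irrefl: "\<And>x. x \<notin> N x"
    and uv: "N u - {v} = N v - {u}" and vw: "N v - {w} = N w - {v}"
  shows "N u - {w} = N w - {u}"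
proof (cases "u = v \<or> v = w \<or> u = w")
  case True
  then show ?thesis using uv vw by auto
next
  case False
  have "v \<in> N u \<longleftrightarrow> u \<in> N v" by (rule sym)
  also have "\<dots> \<longleftrightarrow> u \<in> N w" using vw False by blast
  also have "\<dots> \<longleftrightarrow> w \<in> N u" by (rule sym)
  also have "\<dots> \<longleftrightarrow> w \<in> N v" using uv False by blast
  also have "\<dots> \<longleftrightarrow> v \<in> N w" by (rule sym)
  finally have "v \<in> N u \<longleftrightarrow> v \<in> N w" .
  then show ?thesis using uv vw irrefl False by blast
qed

lemma equiv_type_rel:
  assumes "sym (edges H)" "\<And>x. (x, x) \<notin> edges H"
  shows "equiv (verts H) (type_rel H)"
proof (rule equivI)
  have N: "x \<in> Nu H y \<longleftrightarrow> y \<in> Nu H x" "x \<notin> Nu H x" for x y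
    using assms unfolding Nu_def sym_def by blast+
  show "trans (type_rel H)"
  proof (rule transI, clarsimp simp: type_rel_def)
    fix u v w assume uv: "same_mixed_type H u v" and vw: "same_mixed_type H v w"
    have "Nu H u - {w} = Nu H w - {u}"
      by (rule twin_trans[OF N, where v = v]) (use uv vw in \<open>simp_all add: same_mixed_type_def\<close>)
    then show "same_mixed_type H u w" using uv vw by (simp add: same_mixed_type_def)
  qed
qed (auto simp: type_rel_def same_mixed_type_def intro!: refl_onI symI)

lemma type_rel_subset_mtrancl: "type_rel G \<subseteq> type_rel (mtrancl G)"
proof clarify
  fix u v assume "(u, v) \<in> type_rel G"
  then have uv: "u \<in> verts G" "v \<in> verts G" and N: "Nu G u - {v} = Nu G v - {u}"
    and "Nin G u = Nin G v" "Nout G u = Nout G v"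
    unfolding type_rel_def same_mixed_type_def by auto
  then have arcs: "(x, u) \<in> arcs G \<longleftrightarrow> (x, v) \<in> arcs G" "(u, x) \<in> arcs G \<longleftrightarrow> (v, x) \<in> arcs G"
    for x
    unfolding Nin_def Nout_def by blast+
  have R: "(x, u) \<in> (arcs G)\<^sup>+ \<longleftrightarrow> (x, v) \<in> (arcs G)\<^sup>+"
    "(u, x) \<in> (arcs G)\<^sup>+ \<longleftrightarrow> (v, x) \<in> (arcs G)\<^sup>+" for x
    by (simp add: trancl_unfold_right[of "arcs G"] relcomp_unfold arcs)
      (simp add: trancl_unfold_left[of "arcs G"] relcomp_unfold arcs)
  have E: "(u, x) \<in> edges G \<longleftrightarrow> (v, x) \<in> edges G" if "x \<noteq> u" "x \<noteq> v" for x
    using N that unfolding Nu_def by blast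
  have loops: "(u, u) \<notin> edges G" "(v, v) \<notin> edges G" if "u \<noteq> v"
    using N that unfolding Nu_def by blast+
  have "x \<in> Nu (mtrancl G) u - {v} \<longleftrightarrow> x \<in> Nu (mtrancl G) v - {u}" for x
  proof (cases "x = u \<or> x = v")
    case True
    then show ?thesis using loops by (auto simp: Nu_def mtrancl_def edges_def)
  next
    case False
    then show ?thesis using E[of x] R[of x] by (auto simp: Nu_def mtrancl_def edges_def arcs_def)
  qed
  then have "Nu (mtrancl G) u - {v} = Nu (mtrancl G) v - {u}" by blast
  moreover have "Nin (mtrancl G) u = Nin (mtrancl G) v" "Nout (mtrancl G) u = Nout (mtrancl G) v"
    using R unfolding Nin_def Nout_def by (auto simp: mtrancl_def arcs_def)
  ultimately show "(u, v) \<in> type_rel (mtrancl G)"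
    using uv unfolding type_rel_def same_mixed_type_def by (simp add: mtrancl_def verts_def)
qed

lemma nd_m_mtrancl_le:
  assumes "acyclic_simple_mgraph G"
  shows "nd_m (mtrancl G) \<le> nd_m G"
proof -
  have G: "finite (verts G)" "sym (edges G)" "\<And>x. (x, x) \<notin> edges G"
    using assms unfolding acyclic_simple_mgraph_def by auto
  have "sym (edges (mtrancl G))" "\<And>x. (x, x) \<notin> edges (mtrancl G)" "verts (mtrancl G) = verts G"
    using G(2,3) by (auto simp: mtrancl_def verts_def edges_def sym_def)
  then have "equiv (verts G) (type_rel (mtrancl G))"
    using equiv_type_rel[of "mtrancl G"] by simp
  moreover have "finite (verts G // type_rel G)"
    using G(1) by (rule finite_quotient) (auto simp: type_rel_def)
  ultimately show ?thesis
    using finite_refines_card_le type_rel_subset_mtrancl equiv_type_rel[OF G(2,3)]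
    unfolding nd_m_def \<open>verts (mtrancl G) = verts G\<close> by blast
qed

definition cw_verts :: "'a cwexp \<Rightarrow> 'a set" where
  "cw_verts e = fst (cw_eval e)"
definition cw_edges :: "'a cwexp \<Rightarrow> ('a \<times> 'a) set" where
  "cw_edges e = fst (snd (cw_eval e))"
definition cw_arcs :: "'a cwexp \<Rightarrow> ('a \<times> 'a) set" where
  "cw_arcs e = fst (snd (snd (cw_eval e)))"
definition cw_label :: "'a cwexp \<Rightarrow> 'a \<Rightarrow> nat" where
  "cw_label e = snd (snd (snd (cw_eval e)))"

lemma cw_eval_eq: "cw_eval e = (cw_verts e, cw_edges e, cw_arcs e, cw_label e)"
  by (simp add: cw_verts_def cw_edges_def cw_arcs_def cw_label_def)

lemma cw_graph_eq: "cw_graph e = (cw_verts e, cw_edges e, cw_arcs e)"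
  by (simp add: cw_graph_def cw_eval_eq)

lemma cw_eval_Vtx [simp]:
  "cw_verts (Vtx v i) = {v}" "cw_edges (Vtx v i) = {}" "cw_arcs (Vtx v i) = {}"
  "cw_label (Vtx v i) = (\<lambda>_. i)"
  by (simp_all add: cw_verts_def cw_edges_def cw_arcs_def cw_label_def)

lemma cw_eval_DUnion [simp]:
  "cw_verts (DUnion f g) = cw_verts f \<union> cw_verts g"
  "cw_edges (DUnion f g) = cw_edges f \<union> cw_edges g"
  "cw_arcs (DUnion f g) = cw_arcs f \<union> cw_arcs g"
  "cw_label (DUnion f g) = (\<lambda>x. if x \<in> cw_verts f then cw_label f x else cw_label g x)"
  by (simp_all add: cw_eval_eq[of f] cw_eval_eq[of g]
      cw_verts_def[of "DUnion f g"] cw_edges_def[of "DUnion f g"]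
      cw_arcs_def[of "DUnion f g"] cw_label_def[of "DUnion f g"])

lemma cw_eval_Eta [simp]:
  "cw_verts (Eta i j f) = cw_verts f"
  "cw_edges (Eta i j f) = cw_edges f \<union> {(x, y). x \<in> cw_verts f \<and> y \<in> cw_verts f \<and>
     (cw_label f x = i \<and> cw_label f y = j \<or> cw_label f x = j \<and> cw_label f y = i)}"
  "cw_arcs (Eta i j f) = cw_arcs f"
  "cw_label (Eta i j f) = cw_label f"
  by (simp_all add: cw_verts_def cw_edges_def cw_arcs_def cw_label_def split: prod.split)

lemma cw_eval_Alpha [simp]:
  "cw_verts (Alpha i j f) = cw_verts f"
  "cw_edges (Alpha i j f) = cw_edges f"
  "cw_arcs (Alpha i j f) = cw_arcs f \<union>
     {(x, y). x \<in> cw_verts f \<and> y \<in> cw_verts f \<and> cw_label f x = i \<and> cw_label f y = j}"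
  "cw_label (Alpha i j f) = cw_label f"
  by (simp_all add: cw_verts_def cw_edges_def cw_arcs_def cw_label_def split: prod.split)

lemma cw_eval_Rho [simp]:
  "cw_verts (Rho i j f) = cw_verts f"
  "cw_edges (Rho i j f) = cw_edges f"
  "cw_arcs (Rho i j f) = cw_arcs f"
  "cw_label (Rho i j f) = (\<lambda>x. if cw_label f x = i then j else cw_label f x)"
  by (simp_all add: cw_eval_eq[of f] cw_verts_def[of "Rho i j f"] cw_edges_def[of "Rho i j f"]
      cw_arcs_def[of "Rho i j f"] cw_label_def[of "Rho i j f"])

text \<open>Rewrites the disjointness condition of \<open>cw_wf\<close>; as a simp rule it would loop with
  \<open>cw_verts_def\<close> in the proofs above.\<close>
lemma fst_cw_eval [simp]: "fst (cw_eval e) = cw_verts e"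
  by (simp add: cw_verts_def)

lemma cw_edges_subset: "cw_edges e \<subseteq> cw_verts e \<times> cw_verts e"
  by (induction e) auto

lemma cw_arcs_subset: "cw_arcs e \<subseteq> cw_verts e \<times> cw_verts e"
  by (induction e) auto

lemma sym_cw_edges: "sym (cw_edges e)"
  by (induction e) (auto intro: symI dest: symD)

lemma cw_edges_irrefl: "cw_wf e \<Longrightarrow> (x, x) \<notin> cw_edges e"
  by (induction e) auto

lemma cw_label_in_labels: "x \<in> cw_verts e \<Longrightarrow> cw_label e x \<in> cw_labels e"
  by (induction e) auto

section \<open>Homogeneous subexpressions\<close>

text \<open>Every subexpression \<open>f\<close> of an expression for a graph with edges \<open>E\<close> and arcs \<open>A\<close> is
  homogeneous: what \<open>f\<close> lacks is added by later \<open>\<eta>\<close> and \<open>\<alpha>\<close> operations, which only see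
  labels, and later renamings merge labels but never split them.\<close>

definition cw_homogeneous :: "('a \<times> 'a) set \<Rightarrow> ('a \<times> 'a) set \<Rightarrow> 'a cwexp \<Rightarrow> bool" where
  "cw_homogeneous E A f \<longleftrightarrow>
     (\<forall>u u' v v'. u \<in> cw_verts f \<longrightarrow> u' \<in> cw_verts f \<longrightarrow> v \<in> cw_verts f \<longrightarrow> v' \<in> cw_verts f \<longrightarrow>
        cw_label f u = cw_label f u' \<longrightarrow> cw_label f v = cw_label f v' \<longrightarrow>
        (u, v) \<in> A \<longrightarrow> (u, v) \<notin> cw_arcs f \<longrightarrow> (u', v') \<in> A) \<and>
     (\<forall>u u' v v'. u \<in> cw_verts f \<longrightarrow> u' \<in> cw_verts f \<longrightarrow> v \<in> cw_verts f \<longrightarrow> v' \<in> cw_verts f \<longrightarrow>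
        cw_label f u = cw_label f u' \<longrightarrow> cw_label f v = cw_label f v' \<longrightarrow>
        (u, v) \<in> E \<longrightarrow> (u, v) \<notin> cw_edges f \<longrightarrow> (u', v') \<in> E) \<and>
     (\<forall>u u' z. u \<in> cw_verts f \<longrightarrow> u' \<in> cw_verts f \<longrightarrow> cw_label f u = cw_label f u' \<longrightarrow>
        z \<notin> cw_verts f \<longrightarrow> (u, z) \<in> A \<longrightarrow> (u', z) \<in> A) \<and>
     (\<forall>u u' z. u \<in> cw_verts f \<longrightarrow> u' \<in> cw_verts f \<longrightarrow> cw_label f u = cw_label f u' \<longrightarrow>
        z \<notin> cw_verts f \<longrightarrow> (z, u) \<in> A \<longrightarrow> (z, u') \<in> A)"

lemma cw_homogeneousI:
  assumes "\<And>u u' v v'. \<lbrakk>u \<in> cw_verts f; u' \<in> cw_verts f; v \<in> cw_verts f; v' \<in> cw_verts f;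
      cw_label f u = cw_label f u'; cw_label f v = cw_label f v'; (u, v) \<in> A; (u, v) \<notin> cw_arcs f\<rbrakk>
      \<Longrightarrow> (u', v') \<in> A"
    and "\<And>u u' v v'. \<lbrakk>u \<in> cw_verts f; u' \<in> cw_verts f; v \<in> cw_verts f; v' \<in> cw_verts f;
      cw_label f u = cw_label f u'; cw_label f v = cw_label f v'; (u, v) \<in> E; (u, v) \<notin> cw_edges f\<rbrakk>
      \<Longrightarrow> (u', v') \<in> E"
    and "\<And>u u' z. \<lbrakk>u \<in> cw_verts f; u' \<in> cw_verts f; cw_label f u = cw_label f u';
      z \<notin> cw_verts f; (u, z) \<in> A\<rbrakk> \<Longrightarrow> (u', z) \<in> A"
    and "\<And>u u' z. \<lbrakk>u \<in> cw_verts f; u' \<in> cw_verts f; cw_label f u = cw_label f u';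
      z \<notin> cw_verts f; (z, u) \<in> A\<rbrakk> \<Longrightarrow> (z, u') \<in> A"
  shows "cw_homogeneous E A f"
  unfolding cw_homogeneous_def using assms by blast

lemma cw_homogeneous_arc:
  "\<lbrakk>cw_homogeneous E A f; u \<in> cw_verts f; u' \<in> cw_verts f; cw_label f u = cw_label f u';
    v \<in> cw_verts f; v' \<in> cw_verts f; cw_label f v = cw_label f v'; (u, v) \<in> A; (u, v) \<notin> cw_arcs f\<rbrakk>
   \<Longrightarrow> (u', v') \<in> A"
  unfolding cw_homogeneous_def by (drule conjunct1) blast

lemma cw_homogeneous_edge:
  "\<lbrakk>cw_homogeneous E A f; u \<in> cw_verts f; u' \<in> cw_verts f; cw_label f u = cw_label f u';
    v \<in> cw_verts f; v' \<in> cw_verts f; cw_label f v = cw_label f v'; (u, v) \<in> E; (u, v) \<notin> cw_edges f\<rbrakk>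
   \<Longrightarrow> (u', v') \<in> E"
  unfolding cw_homogeneous_def by (drule conjunct2, drule conjunct1) blast

lemma cw_homogeneous_out:
  "\<lbrakk>cw_homogeneous E A f; u \<in> cw_verts f; u' \<in> cw_verts f; cw_label f u = cw_label f u';
    z \<notin> cw_verts f; (u, z) \<in> A\<rbrakk> \<Longrightarrow> (u', z) \<in> A"
  unfolding cw_homogeneous_def by (drule conjunct2, drule conjunct2, drule conjunct1) blast

lemma cw_homogeneous_in:
  "\<lbrakk>cw_homogeneous E A f; u \<in> cw_verts f; u' \<in> cw_verts f; cw_label f u = cw_label f u';
    z \<notin> cw_verts f; (z, u) \<in> A\<rbrakk> \<Longrightarrow> (z, u') \<in> A"
  unfolding cw_homogeneous_def by (drule conjunct2, drule conjunct2, drule conjunct2) blast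

lemma cw_homogeneous_arc_from:
  assumes "cw_homogeneous E A f" "u \<in> cw_verts f" "u' \<in> cw_verts f" "cw_label f u = cw_label f u'"
    and "(u, z) \<in> A" "(u, z) \<notin> cw_arcs f"
  shows "(u', z) \<in> A"
  by (cases "z \<in> cw_verts f") (use cw_homogeneous_arc[OF assms(1-4) _ _ refl assms(5,6)]
      cw_homogeneous_out[OF assms(1-4) _ assms(5)] in blast)+

lemma cw_homogeneous_arc_to:
  assumes "cw_homogeneous E A f" "u \<in> cw_verts f" "u' \<in> cw_verts f" "cw_label f u = cw_label f u'"
    and "(z, u) \<in> A" "(z, u) \<notin> cw_arcs f"
  shows "(z, u') \<in> A"
  by (cases "z \<in> cw_verts f") (use cw_homogeneous_arc[OF assms(1) _ _ refl assms(2-4) assms(5,6)]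
      cw_homogeneous_in[OF assms(1-4) _ assms(5)] in blast)+

definition cw_fragment :: "nat \<Rightarrow> ('a \<times> 'a) set \<Rightarrow> ('a \<times> 'a) set \<Rightarrow> 'a cwexp \<Rightarrow> bool" where
  "cw_fragment k E A f \<longleftrightarrow> cw_wf f \<and> cw_labels f \<subseteq> {..<k} \<and>
     cw_edges f \<subseteq> E \<and> cw_arcs f \<subseteq> A \<and> cw_homogeneous E A f"

lemma cw_fragment_root:
  assumes "cw_wf e" "cw_labels e \<subseteq> {..<k}"
  shows "cw_fragment k (cw_edges e) (cw_arcs e) e"
  using assms cw_arcs_subset[of e] unfolding cw_fragment_def by (auto intro: cw_homogeneousI)

lemma cw_fragment_subexpr:
  assumes frag: "cw_fragment k E A g" and wf: "cw_wf f"
    and sub: "cw_labels f \<subseteq> cw_labels g" "cw_verts f \<subseteq> cw_verts g"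
      "cw_edges f \<subseteq> cw_edges g" "cw_arcs f \<subseteq> cw_arcs g"
    and label: "\<And>u u'. \<lbrakk>u \<in> cw_verts f; u' \<in> cw_verts f; cw_label f u = cw_label f u'\<rbrakk>
      \<Longrightarrow> cw_label g u = cw_label g u'"
    and hom: "cw_homogeneous (cw_edges g) (cw_arcs g) f"
  shows "cw_fragment k E A f"
proof -
  have g: "cw_labels g \<subseteq> {..<k}" "cw_edges g \<subseteq> E" "cw_arcs g \<subseteq> A" "cw_homogeneous E A g"
    using frag unfolding cw_fragment_def by auto
  have "cw_homogeneous E A f"
  proof (rule cw_homogeneousI)
    fix u u' v v'
    assume u: "u \<in> cw_verts f" "u' \<in> cw_verts f" "cw_label f u = cw_label f u'"
      and v: "v \<in> cw_verts f" "v' \<in> cw_verts f" "cw_label f v = cw_label f v'"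
    show "(u', v') \<in> A" if "(u, v) \<in> A" "(u, v) \<notin> cw_arcs f"
      using cw_homogeneous_arc[OF hom u v _ that(2)] g u v sub
        cw_homogeneous_arc[OF g(4) _ _ label[OF u] _ _ label[OF v] that(1)] by blast
    show "(u', v') \<in> E" if "(u, v) \<in> E" "(u, v) \<notin> cw_edges f"
      using cw_homogeneous_edge[OF hom u v _ that(2)] g u v sub
        cw_homogeneous_edge[OF g(4) _ _ label[OF u] _ _ label[OF v] that(1)] by blast
  next
    fix u u' z
    assume u: "u \<in> cw_verts f" "u' \<in> cw_verts f" "cw_label f u = cw_label f u'"
      and z: "z \<notin> cw_verts f"
    have ug: "u \<in> cw_verts g" "u' \<in> cw_verts g" "cw_label g u = cw_label g u'"
      using u sub label[OF u] by auto
    show "(u', z) \<in> A" if "(u, z) \<in> A"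
      using cw_homogeneous_out[OF hom u z] cw_homogeneous_arc[OF g(4) ug _ _ refl that]
        cw_homogeneous_out[OF g(4) ug _ that] g by blast
    show "(z, u') \<in> A" if "(z, u) \<in> A"
      using cw_homogeneous_in[OF hom u z] cw_homogeneous_arc[OF g(4) _ _ refl ug that]
        cw_homogeneous_in[OF g(4) ug _ that] g by blast
  qed
  then show ?thesis using wf sub g unfolding cw_fragment_def by blast
qed

lemma cw_fragment_DUnionD:
  assumes frag: "cw_fragment k E A (DUnion f g)"
  shows "cw_fragment k E A f" "cw_fragment k E A g"
proof -
  have wf: "cw_wf f" "cw_wf g" "cw_verts f \<inter> cw_verts g = {}"
    using frag unfolding cw_fragment_def by auto
  have sub: "cw_edges f \<subseteq> cw_verts f \<times> cw_verts f" "cw_arcs f \<subseteq> cw_verts f \<times> cw_verts f"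
    "cw_edges g \<subseteq> cw_verts g \<times> cw_verts g" "cw_arcs g \<subseteq> cw_verts g \<times> cw_verts g"
    using cw_edges_subset cw_arcs_subset by blast+
  show "cw_fragment k E A f"
    by (rule cw_fragment_subexpr[OF frag wf(1)], auto intro!: cw_homogeneousI)
      (use sub wf(3) in blast)+
  show "cw_fragment k E A g"
    by (rule cw_fragment_subexpr[OF frag wf(2)], auto intro!: cw_homogeneousI)
      (use sub wf(3) in blast)+
qed

lemma cw_fragment_EtaD:
  assumes "cw_fragment k E A (Eta i j f)"
  shows "cw_fragment k E A f"
  using assms cw_arcs_subset[of f]
  by (intro cw_fragment_subexpr[OF assms]) (auto simp: cw_fragment_def intro!: cw_homogeneousI)

lemma cw_fragment_AlphaD:
  assumes "cw_fragment k E A (Alpha i j f)"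
  shows "cw_fragment k E A f"
  using assms cw_arcs_subset[of f]
  by (intro cw_fragment_subexpr[OF assms]) (auto simp: cw_fragment_def intro!: cw_homogeneousI)

lemma cw_fragment_RhoD:
  assumes "cw_fragment k E A (Rho i j f)"
  shows "cw_fragment k E A f"
  using assms cw_arcs_subset[of f]
  by (intro cw_fragment_subexpr[OF assms]) (auto simp: cw_fragment_def intro!: cw_homogeneousI)

lemma rtrancl_source_in: "\<lbrakk>(x, y) \<in> A\<^sup>*; A \<subseteq> V \<times> V; y \<in> V\<rbrakk> \<Longrightarrow> x \<in> V"
  by (induction rule: converse_rtrancl_induct) auto

lemma rtrancl_target_in: "\<lbrakk>(x, y) \<in> A\<^sup>*; A \<subseteq> V \<times> V; x \<in> V\<rbrakk> \<Longrightarrow> y \<in> V"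
  by (induction rule: rtrancl_induct) auto

lemma trancl_first_new_step:
  "(x, y) \<in> A'\<^sup>+ \<Longrightarrow> (x, y) \<in> A\<^sup>+ \<or> (\<exists>p q. (x, p) \<in> A\<^sup>* \<and> (p, q) \<in> A' - A \<and> (q, y) \<in> A'\<^sup>*)"
proof (induction rule: trancl_induct)
  case (step y z)
  then show ?case
    by (cases "(y, z) \<in> A") (meson DiffI trancl.trancl_into_trancl trancl_into_rtrancl
        rtrancl.rtrancl_refl rtrancl.rtrancl_into_rtrancl)+
qed blast

lemma rtrancl_last_new_step:
  "(x, y) \<in> A'\<^sup>* \<Longrightarrow> (x, y) \<in> A\<^sup>* \<or> (\<exists>p q. (x, p) \<in> A'\<^sup>* \<and> (p, q) \<in> A' - A \<and> (q, y) \<in> A\<^sup>*)"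
proof (induction rule: rtrancl_induct)
  case (step y z)
  then show ?case
    by (cases "(y, z) \<in> A") (meson DiffI rtrancl.rtrancl_into_rtrancl rtrancl.rtrancl_refl)+
qed blast

lemma rtrancl_Un_disjoint:
  assumes "A1 \<subseteq> V1 \<times> V1" "A2 \<subseteq> V2 \<times> V2" "V1 \<inter> V2 = {}" "x \<in> V1"
  shows "(x, z) \<in> (A1 \<union> A2)\<^sup>* \<longleftrightarrow> (x, z) \<in> A1\<^sup>*"
proof
  assume "(x, z) \<in> (A1 \<union> A2)\<^sup>*"
  then show "(x, z) \<in> A1\<^sup>*"
  proof (induction rule: rtrancl_induct)
    case (step y z)
    then have "y \<in> V1" using rtrancl_target_in assms by metis
    then have "(y, z) \<in> A1" using step.hyps(2) assms by blast
    then show ?case using step.IH by simp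
  qed simp
qed (meson in_rtrancl_UnI)

lemma trancl_Un_disjoint_cross:
  assumes "A1 \<subseteq> V1 \<times> V1" "A2 \<subseteq> V2 \<times> V2" "V1 \<inter> V2 = {}" "x \<in> V1" "y \<in> V2"
  shows "(x, y) \<notin> (A1 \<union> A2)\<^sup>+"
  using rtrancl_Un_disjoint[OF assms(1-4)] rtrancl_target_in[OF _ assms(1,4)] assms(3,5)
  by (blast dest: trancl_into_rtrancl)

definition reach_labels :: "('a \<times> 'a) set \<Rightarrow> ('a \<Rightarrow> nat) \<Rightarrow> 'a \<Rightarrow> nat set" where
  "reach_labels A l u = l ` (A\<^sup>* `` {u})"

lemma reach_labels_iff: "c \<in> reach_labels A l x \<longleftrightarrow> (\<exists>p. (x, p) \<in> A\<^sup>* \<and> l p = c)"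
  unfolding reach_labels_def by auto

lemma reach_labels_converse_iff: "c \<in> reach_labels (A\<inverse>) l y \<longleftrightarrow> (\<exists>q. (q, y) \<in> A\<^sup>* \<and> l q = c)"
  unfolding reach_labels_def by (auto simp: rtrancl_converse)

text \<open>A path in \<open>A\<close> that is not a path of \<open>f\<close> has a first and a last arc outside
  \<open>f\<close>. Homogeneity moves these arcs to any vertices with the same labels, and equal reach
  sets provide such vertices reachable from \<open>x'\<close> and reaching \<open>y'\<close>.\<close>
lemma cw_fragment_trancl_transfer:
  assumes frag: "cw_fragment k E A f"
    and x: "x \<in> cw_verts f" "x' \<in> cw_verts f"
      "reach_labels (cw_arcs f) (cw_label f) x = reach_labels (cw_arcs f) (cw_label f) x'"
    and y: "y \<in> cw_verts f" "y' \<in> cw_verts f"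
      "reach_labels ((cw_arcs f)\<inverse>) (cw_label f) y = reach_labels ((cw_arcs f)\<inverse>) (cw_label f) y'"
    and xy: "(x, y) \<in> A\<^sup>+" "(x, y) \<notin> (cw_arcs f)\<^sup>+"
  shows "(x', y') \<in> A\<^sup>+"
proof -
  let ?A = "cw_arcs f" and ?l = "cw_label f" and ?V = "cw_verts f"
  have AV: "?A \<subseteq> ?V \<times> ?V" by (rule cw_arcs_subset)
  have hom: "cw_homogeneous E A f" and AA: "?A\<^sup>* \<subseteq> A\<^sup>*"
    using frag rtrancl_mono unfolding cw_fragment_def by auto
  have from_x': "\<exists>p'. (x', p') \<in> ?A\<^sup>* \<and> p' \<in> ?V \<and> ?l p' = ?l p" if "(x, p) \<in> ?A\<^sup>*" for p
    using that x(3) rtrancl_target_in[OF _ AV x(2)] unfolding set_eq_iff reach_labels_iff by metis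
  have to_y': "\<exists>q'. (q', y') \<in> ?A\<^sup>* \<and> q' \<in> ?V \<and> ?l q' = ?l q" if "(q, y) \<in> ?A\<^sup>*" for q
    using that y(3) rtrancl_source_in[OF _ AV y(2)] unfolding set_eq_iff reach_labels_converse_iff
    by metis
  obtain p q where pq: "(x, p) \<in> ?A\<^sup>*" "(p, q) \<in> A" "(p, q) \<notin> ?A" "(q, y) \<in> A\<^sup>*"
    using trancl_first_new_step[OF xy(1), of ?A] xy(2) by blast
  have p: "p \<in> ?V" using rtrancl_target_in[OF pq(1) AV x(1)] .
  obtain p' where p': "(x', p') \<in> ?A\<^sup>*" "p' \<in> ?V" "?l p' = ?l p" using from_x'[OF pq(1)] by blast
  from rtrancl_last_new_step[OF pq(4), of ?A] show ?thesis
  proof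
    assume "(q, y) \<in> ?A\<^sup>*"
    then obtain q' where q': "(q', y') \<in> ?A\<^sup>*" "q' \<in> ?V" "?l q' = ?l q"
      using to_y' by blast
    have q: "q \<in> ?V" using rtrancl_source_in[OF \<open>(q, y) \<in> ?A\<^sup>*\<close> AV y(1)] .
    have "(p', q') \<in> A" using cw_homogeneous_arc[OF hom p p'(2) p'(3)[symmetric] q q'(2)
        q'(3)[symmetric] pq(2,3)] .
    then show ?thesis using p'(1) q'(1) AA
      by (meson rtrancl_into_trancl1 subsetD trancl_rtrancl_trancl)
  next
    assume "\<exists>r w. (q, r) \<in> A\<^sup>* \<and> (r, w) \<in> A - ?A \<and> (w, y) \<in> ?A\<^sup>*"
    then obtain r w where rw: "(q, r) \<in> A\<^sup>*" "(r, w) \<in> A" "(r, w) \<notin> ?A" "(w, y) \<in> ?A\<^sup>*"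
      by blast
    have w: "w \<in> ?V" using rtrancl_source_in[OF rw(4) AV y(1)] .
    obtain w' where w': "(w', y') \<in> ?A\<^sup>*" "w' \<in> ?V" "?l w' = ?l w" using to_y'[OF rw(4)] by blast
    have "(p', q) \<in> A" by (rule cw_homogeneous_arc_from[OF hom p p'(2) p'(3)[symmetric] pq(2,3)])
    moreover have "(r, w') \<in> A" by (rule cw_homogeneous_arc_to[OF hom w w'(2) w'(3)[symmetric] rw(2,3)])
    ultimately show ?thesis using p'(1) w'(1) rw(1) AA
      by (meson rtrancl_into_trancl1 rtrancl_trancl_trancl subsetD trancl_into_trancl
          trancl_rtrancl_trancl)
  qed
qed

section \<open>Vertex types\<close>

type_synonym cw_type = "nat \<times> nat set \<times> nat set"

definition vertex_type :: "'a cwexp \<Rightarrow> 'a \<Rightarrow> cw_type" where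
  "vertex_type f u = (cw_label f u, reach_labels (cw_arcs f) (cw_label f) u,
     reach_labels ((cw_arcs f)\<inverse>) (cw_label f) u)"

lemma vertex_type_Eta [simp]: "vertex_type (Eta i j f) = vertex_type f"
  by (simp add: vertex_type_def fun_eq_iff)

lemma vertex_type_Rho:
  assumes "vertex_type f u = vertex_type f u'"
  shows "vertex_type (Rho i j f) u = vertex_type (Rho i j f) u'"
proof -
  define h where "h c = (if c = i then j else c)" for c
  have "cw_label (Rho i j f) = h \<circ> cw_label f"
    by (simp add: fun_eq_iff h_def)
  then have "vertex_type (Rho i j f) w = map_prod h (map_prod ((`) h) ((`) h)) (vertex_type f w)" for w
    unfolding vertex_type_def reach_labels_def cw_eval_Rho(3) by (simp add: image_image)
  then show ?thesis using assms by simp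
qed

lemma rtrancl_Un_block:
  fixes V :: "'a set" and l :: "'a \<Rightarrow> 'b" and i j B
  defines "B \<equiv> {(x, y). x \<in> V \<and> y \<in> V \<and> l x = i \<and> l y = j}"
  shows "(u, z) \<in> (A \<union> B)\<^sup>* \<longleftrightarrow>
    (u, z) \<in> A\<^sup>* \<or> (\<exists>p \<in> V. (u, p) \<in> A\<^sup>* \<and> l p = i) \<and> (\<exists>q \<in> V. l q = j \<and> (q, z) \<in> A\<^sup>*)"
proof
  assume "(u, z) \<in> (A \<union> B)\<^sup>*"
  then show "(u, z) \<in> A\<^sup>* \<or> (\<exists>p \<in> V. (u, p) \<in> A\<^sup>* \<and> l p = i) \<and> (\<exists>q \<in> V. l q = j \<and> (q, z) \<in> A\<^sup>*)"
  proof (induction rule: rtrancl_induct)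
    case (step y z)
    then show ?case unfolding B_def by (blast intro: rtrancl_into_rtrancl)
  qed simp
next
  have AB: "A\<^sup>* \<subseteq> (A \<union> B)\<^sup>*" by (rule rtrancl_mono) blast
  assume "(u, z) \<in> A\<^sup>* \<or> (\<exists>p \<in> V. (u, p) \<in> A\<^sup>* \<and> l p = i) \<and> (\<exists>q \<in> V. l q = j \<and> (q, z) \<in> A\<^sup>*)"
  then show "(u, z) \<in> (A \<union> B)\<^sup>*"
  proof
    assume "(\<exists>p \<in> V. (u, p) \<in> A\<^sup>* \<and> l p = i) \<and> (\<exists>q \<in> V. l q = j \<and> (q, z) \<in> A\<^sup>*)"
    then obtain p q where "(u, p) \<in> A\<^sup>*" "(p, q) \<in> B" "(q, z) \<in> A\<^sup>*"
      unfolding B_def by blast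
    then show ?thesis using AB by (meson UnCI r_into_rtrancl rtrancl_trans subsetD)
  qed (use AB in blast)
qed

lemma reach_labels_Un_block:
  assumes AV: "A \<subseteq> V \<times> V" and u: "u \<in> V"
  shows "reach_labels (A \<union> {(x, y). x \<in> V \<and> y \<in> V \<and> l x = i \<and> l y = j}) l u =
    reach_labels A l u \<union>
    (if i \<in> reach_labels A l u then l ` {z. \<exists>q \<in> V. l q = j \<and> (q, z) \<in> A\<^sup>*} else {})"
proof -
  have "(\<exists>p \<in> V. (u, p) \<in> A\<^sup>* \<and> l p = i) \<longleftrightarrow> i \<in> reach_labels A l u"
    using rtrancl_target_in[OF _ AV u] unfolding reach_labels_iff by blast
  then show ?thesis
    unfolding reach_labels_def Image_singleton rtrancl_Un_block by auto
qed

lemma vertex_type_Alpha: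
  assumes "u \<in> cw_verts f" "u' \<in> cw_verts f" "vertex_type f u = vertex_type f u'"
  shows "vertex_type (Alpha i j f) u = vertex_type (Alpha i j f) u'"
proof -
  have AV: "cw_arcs f \<subseteq> cw_verts f \<times> cw_verts f" "(cw_arcs f)\<inverse> \<subseteq> cw_verts f \<times> cw_verts f"
    using cw_arcs_subset[of f] by auto
  have conv: "(cw_arcs f \<union> {(x, y). x \<in> cw_verts f \<and> y \<in> cw_verts f \<and> cw_label f x = i \<and> cw_label f y = j})\<inverse>
    = (cw_arcs f)\<inverse> \<union> {(x, y). x \<in> cw_verts f \<and> y \<in> cw_verts f \<and> cw_label f x = j \<and> cw_label f y = i}"
    by auto
  show ?thesis
    using assms unfolding vertex_type_def cw_eval_Alpha conv
    by (simp add: reach_labels_Un_block[OF AV(1)] reach_labels_Un_block[OF AV(2)])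
qed

lemma reach_labels_Un_disjoint:
  assumes "A1 \<subseteq> V1 \<times> V1" "A2 \<subseteq> V2 \<times> V2" "V1 \<inter> V2 = {}" "x \<in> V1"
    and "\<And>y. y \<in> V1 \<Longrightarrow> l y = l1 y"
  shows "reach_labels (A1 \<union> A2) l x = reach_labels A1 l1 x"
  using rtrancl_Un_disjoint[OF assms(1-4)] rtrancl_target_in[OF _ assms(1,4)] assms(5)
  unfolding reach_labels_def by (auto simp: image_iff)

lemma vertex_type_DUnion:
  assumes "cw_wf (DUnion f g)"
  shows "x \<in> cw_verts f \<Longrightarrow> vertex_type (DUnion f g) x = vertex_type f x"
    and "x \<in> cw_verts g \<Longrightarrow> vertex_type (DUnion f g) x = vertex_type g x"
proof -
  have disj: "cw_verts f \<inter> cw_verts g = {}" "cw_verts g \<inter> cw_verts f = {}" using assms by auto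
  have AV: "cw_arcs f \<subseteq> cw_verts f \<times> cw_verts f" "(cw_arcs f)\<inverse> \<subseteq> cw_verts f \<times> cw_verts f"
    "cw_arcs g \<subseteq> cw_verts g \<times> cw_verts g" "(cw_arcs g)\<inverse> \<subseteq> cw_verts g \<times> cw_verts g"
    using cw_arcs_subset[of f] cw_arcs_subset[of g] by auto
  show "vertex_type (DUnion f g) x = vertex_type f x" if x: "x \<in> cw_verts f"
    using reach_labels_Un_disjoint[OF AV(1,3) disj(1) x] reach_labels_Un_disjoint[OF AV(2,4) disj(1) x] x
    by (simp add: vertex_type_def converse_Un)
  have "cw_label (DUnion f g) y = cw_label g y" if "y \<in> cw_verts g" for y
    using that disj by auto
  then show "vertex_type (DUnion f g) x = vertex_type g x" if x: "x \<in> cw_verts g"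
    using reach_labels_Un_disjoint[OF AV(3,1) disj(2) x] reach_labels_Un_disjoint[OF AV(4,2) disj(2) x]
    unfolding vertex_type_def cw_eval_DUnion(3) converse_Un
    by (simp only: Un_commute[of "cw_arcs f"] Un_commute[of "(cw_arcs f)\<inverse>"] x)
qed

definition types_upto :: "nat \<Rightarrow> cw_type set" where
  "types_upto k = {(a, P, Q). a < k \<and> P \<subseteq> {..<k} \<and> Q \<subseteq> {..<k} \<and> a \<in> P \<and> a \<in> Q}"

lemma vertex_type_in_types_upto:
  assumes "cw_labels f \<subseteq> {..<k}" "u \<in> cw_verts f"
  shows "vertex_type f u \<in> types_upto k"
proof -
  have AV: "cw_arcs f \<subseteq> cw_verts f \<times> cw_verts f" "(cw_arcs f)\<inverse> \<subseteq> cw_verts f \<times> cw_verts f"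
    using cw_arcs_subset[of f] by auto
  have lab: "cw_label f ` cw_verts f \<subseteq> {..<k}" using cw_label_in_labels assms(1) by force
  have "(cw_arcs f)\<^sup>* `` {u} \<subseteq> cw_verts f" "((cw_arcs f)\<inverse>)\<^sup>* `` {u} \<subseteq> cw_verts f"
    using rtrancl_target_in[OF _ AV(1) assms(2)] rtrancl_target_in[OF _ AV(2) assms(2)] by auto
  then have "reach_labels (cw_arcs f) (cw_label f) u \<subseteq> {..<k}"
    "reach_labels ((cw_arcs f)\<inverse>) (cw_label f) u \<subseteq> {..<k}"
    using lab unfolding reach_labels_def by (meson image_mono order_trans)+
  moreover have "cw_label f u \<in> reach_labels (cw_arcs f) (cw_label f) u"
    "cw_label f u \<in> reach_labels ((cw_arcs f)\<inverse>) (cw_label f) u"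
    by (simp_all add: reach_labels_def)
  ultimately show ?thesis
    using lab assms(2) unfolding types_upto_def vertex_type_def by auto
qed

lemma card_subsets_containing:
  assumes "a \<in> S" "finite S"
  shows "card {T. T \<subseteq> S \<and> a \<in> T} = 2 ^ (card S - 1)"
proof -
  have "{T. T \<subseteq> S \<and> a \<in> T} = insert a ` Pow (S - {a})"
  proof (rule set_eqI)
    fix T show "T \<in> {T. T \<subseteq> S \<and> a \<in> T} \<longleftrightarrow> T \<in> insert a ` Pow (S - {a})"
    proof
      assume "T \<in> {T. T \<subseteq> S \<and> a \<in> T}"
      then have "T = insert a (T - {a})" "T - {a} \<in> Pow (S - {a})" by auto
      then show "T \<in> insert a ` Pow (S - {a})" by blast
    qed (use assms(1) in auto)
  qed
  moreover have "inj_on (insert a) (Pow (S - {a}))"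
    by (rule inj_onI) (metis Diff_insert_absorb PowD subset_Diff_insert)
  ultimately show ?thesis using assms by (simp add: card_image card_Pow)
qed

lemma card_types_upto: "card (types_upto k) = k * 4 ^ (k - 1)"
proof -
  have "types_upto k =
      (SIGMA a:{..<k}. {P. P \<subseteq> {..<k} \<and> a \<in> P} \<times> {Q. Q \<subseteq> {..<k} \<and> a \<in> Q})"
    unfolding types_upto_def by auto
  then have "card (types_upto k) = (\<Sum>a<k. 2 ^ (k - 1) * 2 ^ (k - 1))"
    by (simp add: card_SigmaI card_cartesian_product card_subsets_containing)
  then show ?thesis by (simp add: power_mult_distrib[symmetric])
qed

lemma finite_types_upto: "finite (types_upto k)"
  by (rule finite_subset[of _ "{..<k} \<times> Pow {..<k} \<times> Pow {..<k}"]) (auto simp: types_upto_def)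

fun cw_rhos :: "(nat \<times> nat) list \<Rightarrow> 'a cwexp \<Rightarrow> 'a cwexp" where
  "cw_rhos [] X = X"
| "cw_rhos ((i, j) # L) X = Rho i j (cw_rhos L X)"

fun cw_alphas :: "(nat \<times> nat) list \<Rightarrow> 'a cwexp \<Rightarrow> 'a cwexp" where
  "cw_alphas [] X = X"
| "cw_alphas ((i, j) # L) X = Alpha i j (cw_alphas L X)"

fun cw_etas :: "(nat \<times> nat) list \<Rightarrow> 'a cwexp \<Rightarrow> 'a cwexp" where
  "cw_etas [] X = X"
| "cw_etas ((i, j) # L) X = Eta i j (cw_etas L X)"

lemma cw_eval_rhos [simp]:
  "cw_verts (cw_rhos L X) = cw_verts X" "cw_edges (cw_rhos L X) = cw_edges X"
  "cw_arcs (cw_rhos L X) = cw_arcs X" "cw_wf (cw_rhos L X) = cw_wf X"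
  "cw_labels (cw_rhos L X) = cw_labels X \<union> fst ` set L \<union> snd ` set L"
  by (induction L X rule: cw_rhos.induct) auto

lemma cw_eval_alphas [simp]:
  "cw_verts (cw_alphas L X) = cw_verts X" "cw_edges (cw_alphas L X) = cw_edges X"
  "cw_arcs (cw_alphas L X) = cw_arcs X \<union>
     {(x, y). x \<in> cw_verts X \<and> y \<in> cw_verts X \<and> (cw_label X x, cw_label X y) \<in> set L}"
  "cw_label (cw_alphas L X) = cw_label X"
  "cw_wf (cw_alphas L X) = (cw_wf X \<and> (\<forall>(i, j) \<in> set L. i \<noteq> j))"
  "cw_labels (cw_alphas L X) = cw_labels X \<union> fst ` set L \<union> snd ` set L"
  by (induction L X rule: cw_alphas.induct) auto

lemma cw_eval_etas [simp]:
  "cw_verts (cw_etas L X) = cw_verts X" "cw_arcs (cw_etas L X) = cw_arcs X"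
  "cw_edges (cw_etas L X) = cw_edges X \<union> {(x, y). x \<in> cw_verts X \<and> y \<in> cw_verts X \<and>
     ((cw_label X x, cw_label X y) \<in> set L \<or> (cw_label X y, cw_label X x) \<in> set L)}"
  "cw_label (cw_etas L X) = cw_label X"
  "cw_wf (cw_etas L X) = (cw_wf X \<and> (\<forall>(i, j) \<in> set L. i \<noteq> j))"
  "cw_labels (cw_etas L X) = cw_labels X \<union> fst ` set L \<union> snd ` set L"
  by (induction L X rule: cw_etas.induct) auto

lemma cw_label_rhos_map:
  assumes "distinct cs" "\<And>c. c \<in> set cs \<Longrightarrow> g c \<notin> set cs"
  shows "cw_label (cw_rhos (map (\<lambda>c. (c, g c)) cs) X) x =
    (if cw_label X x \<in> set cs then g (cw_label X x) else cw_label X x)"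
  using assms by (induction cs) auto

text \<open>Labels below \<open>M\<close> are the working labels and \<open>[M, 2 * M)\<close> is a scratch copy of them.
  An arbitrary map \<open>F\<close> on working labels becomes a sequence of renamings by first moving
  each \<open>c\<close> to \<open>M + F c\<close>: no renaming then captures a label renamed before.\<close>

definition cw_lift :: "nat \<Rightarrow> (nat \<Rightarrow> nat) \<Rightarrow> 'a cwexp \<Rightarrow> 'a cwexp" where
  "cw_lift M F X = cw_rhos (map (\<lambda>c. (c, M + F c)) [0..<M]) X"

definition cw_lower :: "nat \<Rightarrow> 'a cwexp \<Rightarrow> 'a cwexp" where
  "cw_lower M X = cw_rhos (map (\<lambda>c. (c, c - M)) [M..<2 * M]) X"

lemma cw_label_lift:
  "cw_label (cw_lift M F X) x = (if cw_label X x < M then M + F (cw_label X x) else cw_label X x)"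
  unfolding cw_lift_def by (subst cw_label_rhos_map) auto

lemma cw_label_lower:
  "cw_label (cw_lower M X) x =
    (if M \<le> cw_label X x \<and> cw_label X x < 2 * M then cw_label X x - M else cw_label X x)"
  unfolding cw_lower_def by (subst cw_label_rhos_map) auto

lemma cw_eval_lift [simp]:
  "cw_verts (cw_lift M F X) = cw_verts X" "cw_edges (cw_lift M F X) = cw_edges X"
  "cw_arcs (cw_lift M F X) = cw_arcs X" "cw_wf (cw_lift M F X) = cw_wf X"
  by (simp_all add: cw_lift_def)

lemma cw_eval_lower [simp]:
  "cw_verts (cw_lower M X) = cw_verts X" "cw_edges (cw_lower M X) = cw_edges X"
  "cw_arcs (cw_lower M X) = cw_arcs X" "cw_wf (cw_lower M X) = cw_wf X"
  by (simp_all add: cw_lower_def)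

lemma cw_labels_lift:
  "\<lbrakk>cw_labels X \<subseteq> {..<2 * M}; \<And>c. c < M \<Longrightarrow> F c < M\<rbrakk> \<Longrightarrow> cw_labels (cw_lift M F X) \<subseteq> {..<2 * M}"
  unfolding cw_lift_def by auto

lemma cw_labels_lower: "cw_labels X \<subseteq> {..<2 * M} \<Longrightarrow> cw_labels (cw_lower M X) \<subseteq> {..<2 * M}"
  unfolding cw_lower_def by auto

section \<open>Expressions for the transitive closure\<close>

definition type_labelled_expr ::
    "nat \<Rightarrow> (cw_type \<Rightarrow> nat) \<Rightarrow> ('a \<times> 'a) set \<Rightarrow> ('a \<times> 'a) set \<Rightarrow> 'a cwexp \<Rightarrow> 'a cwexp \<Rightarrow> bool" where
  "type_labelled_expr M code E A f X \<longleftrightarrow>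
     cw_wf X \<and> cw_labels X \<subseteq> {..<2 * M} \<and> cw_verts X = cw_verts f \<and>
     cw_edges X = E \<inter> (cw_verts f \<times> cw_verts f) \<and> cw_arcs X = A \<inter> (cw_verts f \<times> cw_verts f) \<and>
     (\<forall>u \<in> cw_verts f. cw_label X u = code (vertex_type f u))"

text \<open>Equal types in \<open>f\<close> stay equal in \<open>g\<close>, so the code of the type of a vertex in \<open>f\<close>
  determines the code of its type in \<open>g\<close>, and relabelling by this map suffices.\<close>
lemma type_labelled_expr_relabel:
  assumes code: "inj_on code (types_upto k)" "code ` types_upto k \<subseteq> {..<M}"
    and labels: "cw_labels f \<subseteq> {..<k}" "cw_labels g \<subseteq> {..<k}"
    and verts: "cw_verts g = cw_verts f"
    and types: "\<And>u u'. \<lbrakk>u \<in> cw_verts f; u' \<in> cw_verts f; vertex_type f u = vertex_type f u'\<rbrakk>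
      \<Longrightarrow> vertex_type g u = vertex_type g u'"
    and X: "type_labelled_expr M code E A f X"
  shows "\<exists>Y. type_labelled_expr M code E A g Y"
proof -
  define rep where "rep c = (SOME u. u \<in> cw_verts f \<and> code (vertex_type f u) = c)" for c
  define F where "F c = (if \<exists>u \<in> cw_verts f. code (vertex_type f u) = c
    then code (vertex_type g (rep c)) else c)" for c
  have type_code: "code (vertex_type f u) < M" "code (vertex_type g u) < M" if "u \<in> cw_verts f" for u
    using code(2) vertex_type_in_types_upto[OF labels(1) that]
      vertex_type_in_types_upto[OF labels(2)] that verts by auto
  have rep: "rep (code (vertex_type f u)) \<in> cw_verts f"
    "vertex_type f (rep (code (vertex_type f u))) = vertex_type f u" if "u \<in> cw_verts f" for u
  proof -
    have "\<exists>w. w \<in> cw_verts f \<and> code (vertex_type f w) = code (vertex_type f u)" using that by blast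
    then have "rep (code (vertex_type f u)) \<in> cw_verts f \<and>
        code (vertex_type f (rep (code (vertex_type f u)))) = code (vertex_type f u)"
      unfolding rep_def by (rule someI_ex)
    then show "rep (code (vertex_type f u)) \<in> cw_verts f"
      "vertex_type f (rep (code (vertex_type f u))) = vertex_type f u"
      using inj_onD[OF code(1)] vertex_type_in_types_upto[OF labels(1)] that by auto
  qed
  have F_range: "F c < M" if "c < M" for c
    using that type_code(2) rep(1) unfolding F_def by auto
  have F_code: "F (code (vertex_type f u)) = code (vertex_type g u)" if "u \<in> cw_verts f" for u
    using types[OF rep(1)[OF that] that rep(2)[OF that]] that unfolding F_def by auto
  have "cw_labels (cw_lower M (cw_lift M F X)) \<subseteq> {..<2 * M}"
    using X unfolding type_labelled_expr_def by (intro cw_labels_lower cw_labels_lift F_range) auto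
  then have "type_labelled_expr M code E A g (cw_lower M (cw_lift M F X))"
    using X verts F_range F_code type_code
    unfolding type_labelled_expr_def by (auto simp: cw_label_lower cw_label_lift)
  then show ?thesis ..
qed

definition type_invariant :: "('a \<times> 'a) set \<Rightarrow> 'a cwexp \<Rightarrow> 'a cwexp \<Rightarrow> bool" where
  "type_invariant S f g \<longleftrightarrow>
     (\<forall>x x' y y'. x \<in> cw_verts f \<longrightarrow> x' \<in> cw_verts f \<longrightarrow> y \<in> cw_verts g \<longrightarrow> y' \<in> cw_verts g \<longrightarrow>
        vertex_type f x = vertex_type f x' \<longrightarrow> vertex_type g y = vertex_type g y' \<longrightarrow>
        (x, y) \<in> S \<longrightarrow> (x', y') \<in> S)"

lemma type_invariantI:
  assumes "\<And>x x' y y'. \<lbrakk>x \<in> cw_verts f; x' \<in> cw_verts f; y \<in> cw_verts g; y' \<in> cw_verts g;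
      vertex_type f x = vertex_type f x'; vertex_type g y = vertex_type g y'; (x, y) \<in> S\<rbrakk>
      \<Longrightarrow> (x', y') \<in> S"
  shows "type_invariant S f g"
  using assms unfolding type_invariant_def by blast

lemma type_invariantD:
  "\<lbrakk>type_invariant S f g; x \<in> cw_verts f; x' \<in> cw_verts f; y \<in> cw_verts g; y' \<in> cw_verts g;
    vertex_type f x = vertex_type f x'; vertex_type g y = vertex_type g y'; (x, y) \<in> S\<rbrakk>
   \<Longrightarrow> (x', y') \<in> S"
  unfolding type_invariant_def by blast

lemma type_invariant_converse: "type_invariant S g f \<Longrightarrow> type_invariant (S\<inverse>) f g"
  unfolding type_invariant_def by blast

text \<open>Equal types are symmetric, so invariance also transfers non-membership.\<close>
lemma type_invariant_Diff:
  "\<lbrakk>type_invariant S f g; type_invariant T f g\<rbrakk> \<Longrightarrow> type_invariant (S - T) f g"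
  unfolding type_invariant_def by (metis DiffE DiffI)

lemma type_invariant_Un:
  "\<lbrakk>type_invariant S f g; type_invariant T f g\<rbrakk> \<Longrightarrow> type_invariant (S \<union> T) f g"
  unfolding type_invariant_def by blast

lemma cw_fragment_DUnion_type_invariant:
  assumes frag: "cw_fragment k E A (DUnion f g)"
  shows "type_invariant (A\<^sup>+) f g" "type_invariant (A\<^sup>+) g f" "type_invariant E f g"
proof -
  let ?s = "DUnion f g"
  have wf: "cw_wf ?s" and hom: "cw_homogeneous E A ?s" using frag unfolding cw_fragment_def by auto
  have disj: "cw_verts f \<inter> cw_verts g = {}" "cw_verts g \<inter> cw_verts f = {}" using wf by auto
  have AV: "cw_arcs f \<subseteq> cw_verts f \<times> cw_verts f" "cw_arcs g \<subseteq> cw_verts g \<times> cw_verts g"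
    by (rule cw_arcs_subset)+
  note type_s = vertex_type_DUnion[OF wf]
  have transfer: "(x', y') \<in> A\<^sup>+"
    if "x \<in> cw_verts ?s" "x' \<in> cw_verts ?s" "y \<in> cw_verts ?s" "y' \<in> cw_verts ?s"
      "vertex_type ?s x = vertex_type ?s x'" "vertex_type ?s y = vertex_type ?s y'"
      "(x, y) \<in> A\<^sup>+" "(x, y) \<notin> (cw_arcs ?s)\<^sup>+" for x x' y y'
    using cw_fragment_trancl_transfer[OF frag that(1,2) _ that(3,4) _ that(7,8)] that(5,6)
    unfolding vertex_type_def by simp
  have no_path: "(x, y) \<notin> (cw_arcs f \<union> cw_arcs g)\<^sup>+" "(y, x) \<notin> (cw_arcs f \<union> cw_arcs g)\<^sup>+"
    if "x \<in> cw_verts f" "y \<in> cw_verts g" for x y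
    using trancl_Un_disjoint_cross[OF AV disj(1) that]
      trancl_Un_disjoint_cross[OF AV(2,1) disj(2) that(2,1)] by (simp_all add: Un_commute)
  show "type_invariant (A\<^sup>+) f g"
    by (rule type_invariantI, rule transfer) (use no_path(1) in \<open>auto simp: type_s\<close>)
  show "type_invariant (A\<^sup>+) g f"
    by (rule type_invariantI, rule transfer) (use no_path(2) in \<open>auto simp: type_s\<close>)
  show "type_invariant E f g"
  proof (rule type_invariantI)
    fix x x' y y'
    assume x: "x \<in> cw_verts f" "x' \<in> cw_verts f" "vertex_type f x = vertex_type f x'"
      and y: "y \<in> cw_verts g" "y' \<in> cw_verts g" "vertex_type g y = vertex_type g y'"
      and xy: "(x, y) \<in> E"
    have V: "x \<in> cw_verts ?s" "x' \<in> cw_verts ?s" "y \<in> cw_verts ?s" "y' \<in> cw_verts ?s"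
      using x y by simp_all
    have "(x, y) \<notin> cw_edges ?s"
      using x y disj cw_edges_subset[of f] cw_edges_subset[of g] by auto
    moreover have "cw_label ?s x = cw_label ?s x'" "cw_label ?s y = cw_label ?s y'"
      using x y type_s unfolding vertex_type_def by (metis prod.inject)+
    ultimately show "(x', y') \<in> E"
      using cw_homogeneous_edge[OF hom V(1,2) _ V(3,4) _ xy] by blast
  qed
qed

definition code_rel :: "(cw_type \<Rightarrow> nat) \<Rightarrow> ('a \<times> 'a) set \<Rightarrow> 'a cwexp \<Rightarrow> 'a cwexp \<Rightarrow> (nat \<times> nat) set" where
  "code_rel code S f g = {(code (vertex_type f x), code (vertex_type g y)) | x y.
     x \<in> cw_verts f \<and> y \<in> cw_verts g \<and> (x, y) \<in> S}"

lemma code_rel_iff: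
  assumes code: "inj_on code (types_upto k)"
    and labels: "cw_labels f \<subseteq> {..<k}" "cw_labels g \<subseteq> {..<k}"
    and inv: "type_invariant S f g" and x: "x \<in> cw_verts f" and y: "y \<in> cw_verts g"
  shows "(code (vertex_type f x), code (vertex_type g y)) \<in> code_rel code S f g \<longleftrightarrow> (x, y) \<in> S"
proof
  assume "(code (vertex_type f x), code (vertex_type g y)) \<in> code_rel code S f g"
  then obtain x0 y0 where x0: "x0 \<in> cw_verts f" "code (vertex_type f x0) = code (vertex_type f x)"
    and y0: "y0 \<in> cw_verts g" "code (vertex_type g y0) = code (vertex_type g y)"
    and "(x0, y0) \<in> S"
    unfolding code_rel_def by fastforce
  moreover have "vertex_type f x0 = vertex_type f x" "vertex_type g y0 = vertex_type g y"
    using inj_onD[OF code x0(2)] inj_onD[OF code y0(2)] x0(1) y0(1) x y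
      vertex_type_in_types_upto[OF labels(1)] vertex_type_in_types_upto[OF labels(2)] by blast+
  ultimately show "(x, y) \<in> S" using type_invariantD[OF inv] x y by blast
qed (use x y in \<open>auto simp: code_rel_def\<close>)

definition cross_pairs :: "nat \<Rightarrow> (nat \<times> nat) set \<Rightarrow> (nat \<times> nat) list" where
  "cross_pairs M P = [(c, M + d). c \<leftarrow> [0..<M], d \<leftarrow> [0..<M], (c, d) \<in> P]"

lemma cross_pairs_label_iff:
  assumes "V1 \<inter> V2 = {}" "x \<in> V1 \<union> V2" "y \<in> V1 \<union> V2"
    and "\<And>x. x \<in> V1 \<Longrightarrow> l x = a x \<and> a x < M" "\<And>y. y \<in> V2 \<Longrightarrow> l y = M + b y \<and> b y < M"
  shows "(l x, l y) \<in> set (cross_pairs M P) \<longleftrightarrow> x \<in> V1 \<and> y \<in> V2 \<and> (a x, b y) \<in> P"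
  using assms(1-3) assms(4,5)[of x] assms(4,5)[of y] unfolding cross_pairs_def
  by (cases "x \<in> V1"; cases "y \<in> V1") auto

lemma set_cross_pairs: "set (cross_pairs M P) \<subseteq> {..<M} \<times> {M..<2 * M}"
  by (auto simp: cross_pairs_def)

lemma cross_pairs_code_rel_iff:
  assumes code: "inj_on code (types_upto k)" "code ` types_upto k \<subseteq> {..<M}"
    and wf: "cw_wf (DUnion f g)" and labels: "cw_labels (DUnion f g) \<subseteq> {..<k}"
    and l: "\<And>x. x \<in> cw_verts f \<Longrightarrow> l x = code (vertex_type f x)"
      "\<And>y. y \<in> cw_verts g \<Longrightarrow> l y = M + code (vertex_type g y)"
    and inv: "type_invariant S f g"
    and xy: "x \<in> cw_verts f \<union> cw_verts g" "y \<in> cw_verts f \<union> cw_verts g"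
  shows "(l x, l y) \<in> set (cross_pairs M (code_rel code S f g)) \<longleftrightarrow>
    x \<in> cw_verts f \<and> y \<in> cw_verts g \<and> (x, y) \<in> S"
proof -
  have lf: "cw_labels f \<subseteq> {..<k}" and lg: "cw_labels g \<subseteq> {..<k}" using labels by auto
  have "l x = code (vertex_type f x) \<and> code (vertex_type f x) < M" if "x \<in> cw_verts f" for x
    using l(1)[OF that] code(2) vertex_type_in_types_upto[OF lf that] by blast
  moreover have "l y = M + code (vertex_type g y) \<and> code (vertex_type g y) < M"
    if "y \<in> cw_verts g" for y
    using l(2)[OF that] code(2) vertex_type_in_types_upto[OF lg that] by blast
  ultimately have "(l x, l y) \<in> set (cross_pairs M (code_rel code S f g)) \<longleftrightarrow>
      x \<in> cw_verts f \<and> y \<in> cw_verts g \<and>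
      (code (vertex_type f x), code (vertex_type g y)) \<in> code_rel code S f g"
    using wf xy by (intro cross_pairs_label_iff) auto
  then show ?thesis using code_rel_iff[OF code(1) lf lg inv] by blast
qed

lemma type_labelled_expr_DUnion_lift:
  fixes M :: nat and X1 X2 defines "Z \<equiv> DUnion X1 (cw_lift M id X2)"
  assumes code: "code ` types_upto k \<subseteq> {..<M}"
    and wf: "cw_wf (DUnion f g)" and labels: "cw_labels g \<subseteq> {..<k}"
    and X1: "type_labelled_expr M code E A f X1" and X2: "type_labelled_expr M code E A g X2"
  shows "cw_wf Z" "cw_labels Z \<subseteq> {..<2 * M}" "cw_verts Z = cw_verts f \<union> cw_verts g"
    "cw_edges Z = E \<inter> (cw_verts f \<times> cw_verts f) \<union> E \<inter> (cw_verts g \<times> cw_verts g)"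
    "cw_arcs Z = A \<inter> (cw_verts f \<times> cw_verts f) \<union> A \<inter> (cw_verts g \<times> cw_verts g)"
    "x \<in> cw_verts f \<Longrightarrow> cw_label Z x = code (vertex_type f x)"
    "y \<in> cw_verts g \<Longrightarrow> cw_label Z y = M + code (vertex_type g y)"
proof -
  have disj: "cw_verts f \<inter> cw_verts g = {}" using wf by simp
  then show "cw_wf Z" "cw_labels Z \<subseteq> {..<2 * M}" "cw_verts Z = cw_verts f \<union> cw_verts g"
    "cw_edges Z = E \<inter> (cw_verts f \<times> cw_verts f) \<union> E \<inter> (cw_verts g \<times> cw_verts g)"
    "cw_arcs Z = A \<inter> (cw_verts f \<times> cw_verts f) \<union> A \<inter> (cw_verts g \<times> cw_verts g)"
    using X1 X2 cw_labels_lift[of X2 M id] unfolding Z_def type_labelled_expr_def by auto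
  show "x \<in> cw_verts f \<Longrightarrow> cw_label Z x = code (vertex_type f x)"
    using X1 by (simp add: Z_def type_labelled_expr_def)
  assume y: "y \<in> cw_verts g"
  then have "code (vertex_type g y) < M" using code vertex_type_in_types_upto[OF labels] by blast
  then show "cw_label Z y = M + code (vertex_type g y)"
    using X1 X2 y disj by (auto simp: Z_def type_labelled_expr_def cw_label_lift)
qed

text \<open>The labels of \<open>X2\<close> are moved to the scratch copy, so that arcs and edges between
  the two sides can be added for every pair of codes; by type invariance this adds exactly
  the pairs of the relations.\<close>
lemma type_labelled_expr_DUnion:
  assumes code: "inj_on code (types_upto k)" "code ` types_upto k \<subseteq> {..<M}"
    and wf: "cw_wf (DUnion f g)" and labels: "cw_labels (DUnion f g) \<subseteq> {..<k}"
    and inv: "type_invariant A f g" "type_invariant (A\<inverse>) f g" "type_invariant E f g"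
    and symE: "sym E"
    and X1: "type_labelled_expr M code E A f X1" and X2: "type_labelled_expr M code E A g X2"
  shows "\<exists>Y. type_labelled_expr M code E A (DUnion f g) Y"
proof -
  let ?Vf = "cw_verts f" and ?Vg = "cw_verts g"
  define Z where "Z = DUnion X1 (cw_lift M id X2)"
  have disj: "?Vf \<inter> ?Vg = {}" using wf by simp
  have "cw_labels g \<subseteq> {..<k}" using labels by simp
  note Z = type_labelled_expr_DUnion_lift[OF code(2) wf this X1 X2, folded Z_def]
  have cross: "(cw_label Z x, cw_label Z y) \<in> set (cross_pairs M (code_rel code S f g)) \<longleftrightarrow>
      x \<in> ?Vf \<and> y \<in> ?Vg \<and> (x, y) \<in> S"
    if "type_invariant S f g" "x \<in> ?Vf \<union> ?Vg" "y \<in> ?Vf \<union> ?Vg" for S x y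
    by (rule cross_pairs_code_rel_iff[where l = "cw_label Z", OF code wf labels Z(6,7) that])
  define LA where "LA = cross_pairs M (code_rel code A f g) @
    map prod.swap (cross_pairs M (code_rel code (A\<inverse>) f g))"
  define LE where "LE = cross_pairs M (code_rel code E f g)"
  define Y where "Y = cw_lower M (cw_etas LE (cw_alphas LA Z))"
  have LA_iff: "(cw_label Z x, cw_label Z y) \<in> set LA \<longleftrightarrow>
      (x, y) \<in> A \<and> (x \<in> ?Vf \<and> y \<in> ?Vg \<or> x \<in> ?Vg \<and> y \<in> ?Vf)"
    if "x \<in> ?Vf \<union> ?Vg" "y \<in> ?Vf \<union> ?Vg" for x y
    using cross[OF inv(1) that] cross[OF inv(2) that(2,1)] unfolding LA_def by auto
  have LE_iff: "(cw_label Z x, cw_label Z y) \<in> set LE \<longleftrightarrow> x \<in> ?Vf \<and> y \<in> ?Vg \<and> (x, y) \<in> E"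
    if "x \<in> ?Vf \<union> ?Vg" "y \<in> ?Vf \<union> ?Vg" for x y
    unfolding LE_def by (rule cross[OF inv(3) that])
  have "set LA \<union> set LE \<subseteq> {..<M} \<times> {M..<2 * M} \<union> {M..<2 * M} \<times> {..<M}"
    using set_cross_pairs unfolding LA_def LE_def by fastforce
  then have "cw_wf Y" "cw_labels Y \<subseteq> {..<2 * M}"
    using Z(1,2) unfolding Y_def by (fastforce intro!: cw_labels_lower)+
  moreover have "cw_verts Y = cw_verts (DUnion f g)"
    using Z(3) by (simp add: Y_def)
  moreover have "cw_arcs Y = A \<inter> (cw_verts (DUnion f g) \<times> cw_verts (DUnion f g))"
    using Z(3,5) LA_iff by (auto simp: Y_def)
  moreover have "cw_edges Y = E \<inter> (cw_verts (DUnion f g) \<times> cw_verts (DUnion f g))"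
    using Z(3,4) LE_iff disj symD[OF symE] by (auto simp: Y_def)
  moreover have "cw_label Y u = code (vertex_type (DUnion f g) u)" if "u \<in> cw_verts (DUnion f g)" for u
    using that code(2) vertex_type_in_types_upto[OF labels that] Z(6,7) vertex_type_DUnion[OF wf] disj
    by (auto simp: Y_def cw_label_lower)
  ultimately have "type_labelled_expr M code E A (DUnion f g) Y"
    unfolding type_labelled_expr_def by blast
  then show ?thesis ..
qed

lemma type_labelled_expr_exists:
  assumes code: "inj_on code (types_upto k)" "code ` types_upto k \<subseteq> {..<M}"
    and E: "sym E" "\<And>v. (v, v) \<notin> E" and A: "\<And>v. (v, v) \<notin> A\<^sup>+"
  shows "cw_fragment k E A f \<Longrightarrow> \<exists>X. type_labelled_expr M code (E - (A\<^sup>+ \<union> (A\<^sup>+)\<inverse>)) (A\<^sup>+) f X"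
proof (induction f)
  case (Vtx v i)
  then have "(i, {i}, {i}) \<in> types_upto k" unfolding cw_fragment_def types_upto_def by simp
  then have "type_labelled_expr M code (E - (A\<^sup>+ \<union> (A\<^sup>+)\<inverse>)) (A\<^sup>+) (Vtx v i) (Vtx v (code (i, {i}, {i})))"
    using code(2) E(2) A unfolding type_labelled_expr_def
    by (auto simp: vertex_type_def reach_labels_def)
  then show ?case ..
next
  case (DUnion f g)
  have wf: "cw_wf (DUnion f g)" and labels: "cw_labels (DUnion f g) \<subseteq> {..<k}"
    using DUnion.prems unfolding cw_fragment_def by auto
  note inv = cw_fragment_DUnion_type_invariant[OF DUnion.prems]
  obtain X1 X2 where "type_labelled_expr M code (E - (A\<^sup>+ \<union> (A\<^sup>+)\<inverse>)) (A\<^sup>+) f X1"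
    "type_labelled_expr M code (E - (A\<^sup>+ \<union> (A\<^sup>+)\<inverse>)) (A\<^sup>+) g X2"
    using DUnion.IH cw_fragment_DUnionD[OF DUnion.prems] by blast
  moreover have "sym (E - (A\<^sup>+ \<union> (A\<^sup>+)\<inverse>))"
    using E(1) by (auto simp: sym_def)
  moreover have "type_invariant (E - (A\<^sup>+ \<union> (A\<^sup>+)\<inverse>)) f g"
    using inv by (intro type_invariant_Diff type_invariant_Un type_invariant_converse)
  ultimately show ?case
    by (intro type_labelled_expr_DUnion[OF code wf labels inv(1) type_invariant_converse[OF inv(2)]])
next
  case (Eta i j f)
  then obtain X where X: "type_labelled_expr M code (E - (A\<^sup>+ \<union> (A\<^sup>+)\<inverse>)) (A\<^sup>+) f X"
    using cw_fragment_EtaD by blast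
  show ?case
    using Eta.prems unfolding cw_fragment_def
    by (intro type_labelled_expr_relabel[OF code _ _ _ _ X]) auto
next
  case (Alpha i j f)
  then obtain X where X: "type_labelled_expr M code (E - (A\<^sup>+ \<union> (A\<^sup>+)\<inverse>)) (A\<^sup>+) f X"
    using cw_fragment_AlphaD by blast
  show ?case
    using Alpha.prems vertex_type_Alpha unfolding cw_fragment_def
    by (intro type_labelled_expr_relabel[OF code _ _ _ _ X]) auto
next
  case (Rho i j f)
  then obtain X where X: "type_labelled_expr M code (E - (A\<^sup>+ \<union> (A\<^sup>+)\<inverse>)) (A\<^sup>+) f X"
    using cw_fragment_RhoD by blast
  show ?case
    using Rho.prems vertex_type_Rho unfolding cw_fragment_def
    by (intro type_labelled_expr_relabel[OF code _ _ _ _ X]) auto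
qed

lemma mtrancl_eq: "mtrancl (V, E, A) = (V, E - (A\<^sup>+ \<union> (A\<^sup>+)\<inverse>), A\<^sup>+)"
  by (simp add: mtrancl_def verts_def edges_def arcs_def)

lemma cw_expr_mtrancl:
  assumes e: "cw_wf e" "cw_labels e \<subseteq> {..<k}" and acyc: "acyclic (cw_arcs e)"
  shows "\<exists>X. cw_wf X \<and> cw_labels X \<subseteq> {..<2 * card (types_upto k)} \<and> cw_graph X = mtrancl (cw_graph e)"
proof -
  let ?V = "cw_verts e" and ?E = "cw_edges e" and ?A = "cw_arcs e"
  obtain code where "bij_betw code (types_upto k) {0..<card (types_upto k)}"
    using ex_bij_betw_finite_nat[OF finite_types_upto] by blast
  then have code: "inj_on code (types_upto k)" "code ` types_upto k \<subseteq> {..<card (types_upto k)}"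
    by (auto simp: bij_betw_def)
  have "(v, v) \<notin> ?A\<^sup>+" for v using acyc unfolding acyclic_def by blast
  then obtain X where X: "type_labelled_expr (card (types_upto k)) code
      (?E - (?A\<^sup>+ \<union> (?A\<^sup>+)\<inverse>)) (?A\<^sup>+) e X"
    using type_labelled_expr_exists[OF code sym_cw_edges cw_edges_irrefl[OF e(1)]
      _ cw_fragment_root[OF e]] by blast
  have "?A\<^sup>+ \<subseteq> ?V \<times> ?V" by (rule trancl_subset_Sigma[OF cw_arcs_subset])
  then have "cw_graph X = mtrancl (cw_graph e)"
    using X cw_edges_subset[of e] unfolding type_labelled_expr_def cw_graph_eq mtrancl_eq by auto
  then show ?thesis using X unfolding type_labelled_expr_def by blast
qed

section \<open>Mixed clique-width\<close>

fun cw_vertices :: "('a \<Rightarrow> nat) \<Rightarrow> 'a list \<Rightarrow> 'a cwexp" where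
  "cw_vertices h [x] = Vtx x (h x)"
| "cw_vertices h (x # y # zs) = DUnion (Vtx x (h x)) (cw_vertices h (y # zs))"

lemma cw_eval_vertices:
  "\<lbrakk>xs \<noteq> []; distinct xs\<rbrakk> \<Longrightarrow>
    cw_verts (cw_vertices h xs) = set xs \<and> cw_edges (cw_vertices h xs) = {} \<and>
    cw_arcs (cw_vertices h xs) = {} \<and> (\<forall>x \<in> set xs. cw_label (cw_vertices h xs) x = h x) \<and>
    cw_wf (cw_vertices h xs) \<and> cw_labels (cw_vertices h xs) = h ` set xs"
  by (induction h xs rule: cw_vertices.induct) auto

lemma Collect_map_prod_image_eq:
  assumes "inj_on h V" "S \<subseteq> V \<times> V"
  shows "{(x, y). x \<in> V \<and> y \<in> V \<and> (h x, h y) \<in> map_prod h h ` S} = S"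
  using assms by (auto dest: inj_onD)

lemma cw_expr_exists:
  assumes V: "finite V" "V \<noteq> {}" and EA: "E \<subseteq> V \<times> V" "A \<subseteq> V \<times> V"
    and "sym E" "\<And>x. (x, x) \<notin> E" "\<And>x. (x, x) \<notin> A"
  shows "\<exists>e. cw_wf e \<and> cw_labels e \<subseteq> {..<card V} \<and> cw_graph e = (V, E, A)"
proof -
  obtain xs where xs: "set xs = V" "distinct xs" "xs \<noteq> []"
    using finite_distinct_list[OF V(1)] V(2) by auto
  obtain h where "bij_betw h V {0..<card V}" using ex_bij_betw_finite_nat[OF V(1)] by blast
  then have h: "inj_on h V" "h ` V \<subseteq> {..<card V}" by (auto simp: bij_betw_def)
  have "finite E" "finite A" using EA V(1) by (auto intro: finite_subset)
  then obtain es as where es: "set es = E" and as: "set as = A" by (meson finite_list)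
  define X where "X = cw_vertices h xs"
  define e where "e = cw_etas (map (map_prod h h) es) (cw_alphas (map (map_prod h h) as) X)"
  have X: "cw_verts X = V" "cw_edges X = {}" "cw_arcs X = {}" "\<And>x. x \<in> V \<Longrightarrow> cw_label X x = h x"
    "cw_wf X" "cw_labels X = h ` V"
    using cw_eval_vertices[OF xs(3,2), of h] xs(1) unfolding X_def by auto
  have "cw_arcs e = {(x, y). x \<in> V \<and> y \<in> V \<and> (h x, h y) \<in> map_prod h h ` A}"
    using X unfolding e_def by (auto simp: as)
  then have arcs: "cw_arcs e = A" using Collect_map_prod_image_eq[OF h(1) EA(2)] by simp
  have "cw_edges e = {(x, y). x \<in> V \<and> y \<in> V \<and> (h x, h y) \<in> map_prod h h ` E} \<union>
      {(x, y). x \<in> V \<and> y \<in> V \<and> (h x, h y) \<in> map_prod h h ` E}\<inverse>"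
    using X unfolding e_def by (auto simp: es)
  then have edges: "cw_edges e = E"
    using Collect_map_prod_image_eq[OF h(1) EA(1)] \<open>sym E\<close> by (simp add: sym_conv_converse_eq)
  have "\<forall>(x, y) \<in> A \<union> E. h x \<noteq> h y"
    using EA assms(6,7) inj_onD[OF h(1)] by blast
  then have wf: "cw_wf e" using X(5) unfolding e_def by (simp add: es as ball_Un map_prod_def split_def)
  have "h x < card V" if "x \<in> V" for x using h(2) that by blast
  then have labels: "cw_labels e \<subseteq> {..<card V}"
    using X(6) EA unfolding e_def by (auto simp: es as)
  show ?thesis
    using wf labels arcs edges X(1) by (intro exI[of _ e]) (simp add: cw_graph_eq e_def)
qed

lemma cw_m_attained:
  assumes "cw_wf e" "cw_labels e \<subseteq> {..<k}" "cw_graph e = G"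
  shows "\<exists>e. cw_wf e \<and> cw_labels e \<subseteq> {..<cw_m G} \<and> cw_graph e = G"
  unfolding cw_m_def by (rule LeastI[of _ k]) (use assms in blast)

lemma cw_m_le: "\<lbrakk>cw_wf e; cw_labels e \<subseteq> {..<k}; cw_graph e = G\<rbrakk> \<Longrightarrow> cw_m G \<le> k"
  unfolding cw_m_def by (rule Least_le) blast

lemma two_card_types_upto_le: "2 * card (types_upto k) \<le> 4 ^ k * k"
  by (cases k) (simp_all add: card_types_upto)

lemma cw_m_mtrancl_le:
  assumes G: "acyclic_simple_mgraph G"
  shows "cw_m (mtrancl G) \<le> 4 ^ cw_m G * cw_m G"
proof (cases "verts G = {}")
  case True
  \<comment> \<open>no expression constructs the empty graph, so \<open>cw_m G\<close> is unspecified here\<close>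
  then have "mtrancl G = G"
    using G unfolding acyclic_simple_mgraph_def mtrancl_def verts_def edges_def arcs_def
    by (cases G) auto
  then show ?thesis by simp
next
  case False
  have "(x, x) \<notin> arcs G" for x
    using G unfolding acyclic_simple_mgraph_def acyclic_def by blast
  then have "\<exists>e. cw_wf e \<and> cw_labels e \<subseteq> {..<card (verts G)} \<and> cw_graph e = G"
    using G False cw_expr_exists[of "verts G" "edges G" "arcs G"]
    unfolding acyclic_simple_mgraph_def by (simp add: verts_def edges_def arcs_def)
  then obtain e where e: "cw_wf e" "cw_labels e \<subseteq> {..<cw_m G}" "cw_graph e = G"
    using cw_m_attained by blast
  then have "acyclic (cw_arcs e)"
    using G unfolding acyclic_simple_mgraph_def cw_graph_eq arcs_def by auto
  then obtain X where "cw_wf X" "cw_labels X \<subseteq> {..<2 * card (types_upto (cw_m G))}"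
    "cw_graph X = mtrancl G"
    using cw_expr_mtrancl[OF e(1,2)] e(3) by blast
  then have "cw_m (mtrancl G) \<le> 2 * card (types_upto (cw_m G))" by (rule cw_m_le)
  then show ?thesis using two_card_types_upto_le order_trans by blast
qed

theorem mainTheorem18:
  fixes G :: "'a mgraph"
  assumes "acyclic_simple_mgraph G"
  shows "nd_m (mtrancl G) \<le> nd_m G \<and> cw_m (mtrancl G) \<le> 4 ^ cw_m G * cw_m G"
  using nd_m_mtrancl_le[OF assms] cw_m_mtrancl_le[OF assms] by blast

end
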